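(* Let $I=\{1,2\}$, $A=\{x,y\}$ with $x\ne y$, let $\mathcal C=\mathcal C(I,A,(\rho_i)_{i\in I},(C^a)_{a\in A})$ be a Cartan scheme with $\rho_1(x)=y$, $\rho_1(y)=x$, $\rho_2=\mathrm{id}_A$, and let $\mathcal R=\mathcal R(\mathcal C,(R^a)_{a\in A})$ be a root system of type $\mathcal C$. Then $\mathcal R$ is finite if and only if, up to interchanging $x$ and $y$, one of the following holds: (1) $C^x=C^y$ is of finite type $A_1\times A_1$, $B_2$ or $G_2$, i.e. $c^x_{12}=c^x_{21}=0$ or $c^x_{12}c^x_{21}\in\{2,3\}$; (2) $c^x_{12}=c^y_{12}=-1$, $c^x_{21}=-3$ and $c^y_{21}\in\{-4,-5\}$. In case (1), $R^x=R^y$ is the usual set of roots of the generalized Cartan matrix $C^x=C^y$. In case (2), writing $1^m2^n$ for $m\alpha_1+n\alpha_2$ (exponents $1$ and factors with exponent $0$ omitted), one has, if $c^y_{21}=-4$: $R^x_+=\{1,2,12,12^2,12^3,1^22^3,1^32^4,1^32^5\}$, $R^y_+=\{1,2,12,12^2,12^3,12^4,1^22^3,1^22^5\}$; and if $c^y_{21}=-5$: $R^x_+=\{1,2,12,12^2,12^3,1^22^3,1^32^4,1^32^5,1^42^5,1^42^7,1^52^7,1^52^8\}$, $R^y_+=\{1,2,12,12^2,12^3,12^4,12^5,1^22^3,1^22^5,1^22^7,1^32^7,1^32^8\}$.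
   Context: Let $\{\alpha_i\mid i\in I\}$ be the standard basis of $\mathbb Z^I$; $\mathbb N_0=\{0,1,2,\dots\}$. A generalized Cartan matrix is $C=(c_{ij})_{i,j\in I}\in\mathbb Z^{I\times I}$ with $c_{ii}=2$, $c_{jk}\le0$ for $j\ne k$, and $c_{ij}=0\Rightarrow c_{ji}=0$. A Cartan scheme $\mathcal C=\mathcal C(I,A,(\rho_i)_{i\in I},(C^a)_{a\in A})$ consists of a nonempty set $A$, maps $\rho_i:A\to A$ and generalized Cartan matrices $C^a=(c^a_{jk})_{j,k\in I}$ such that (C1) $\rho_i^2=\mathrm{id}$ and (C2) $c^a_{ij}=c^{\rho_i(a)}_{ij}$ for all $a\in A$, $i,j\in I$. For $i\in I$, $a\in A$ let $\sigma_i^a\in\mathrm{Aut}(\mathbb Z^I)$, $\sigma_i^a(\alpha_j)=\alpha_j-c^a_{ij}\alpha_i$. A root system of type $\mathcal C$ is a family $\mathcal R=\mathcal R(\mathcal C,(R^a)_{a\in A})$ of subsets $R^a\subset\mathbb Z^I$ such that, writing $R^a_+=R^a\cap\mathbb N_0^I$ and $m^a_{i,j}=|R^a\cap(\mathbb N_0\alpha_i+\mathbb N_0\alpha_j)|$, for all $a\in A$, $i,j\in I$: (R1) $R^a=R^a_+\cup(-R^a_+)$; (R2) $R^a\cap\mathbb Z\alpha_i=\{\alpha_i,-\alpha_i\}$; (R3) $\sigma_i^a(R^a)=R^{\rho_i(a)}$; (R4) if $i\neq j$ and $m^a_{i,j}$ is finite then $(\rho_i\rho_j)^{m^a_{i,j}}(a)=a$.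 It is finite if every $R^a$ is finite. *)

theory Defs
  imports Main
begin

text \<open>Vectors of Z^I are functions 'i => int vanishing outside I.\<close>

definition zvec :: "'i set \<Rightarrow> ('i \<Rightarrow> int) set" where
  "zvec I = {v. \<forall>i. i \<notin> I \<longrightarrow> v i = 0}"

definition alpha :: "'i \<Rightarrow> 'i \<Rightarrow> int" where
  "alpha i = (\<lambda>j. if j = i then 1 else 0)"

definition gcm :: "'i set \<Rightarrow> ('i \<Rightarrow> 'i \<Rightarrow> int) \<Rightarrow> bool" where
  "gcm I M \<longleftrightarrow> (\<forall>i\<in>I. M i i = 2) \<and> (\<forall>j\<in>I. \<forall>k\<in>I. j \<noteq> k \<longrightarrow> M j k \<le> 0)
     \<and> (\<forall>i\<in>I. \<forall>j\<in>I. M i j = 0 \<longrightarrow> M j i = 0)"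

definition cartan_scheme ::
  "'i set \<Rightarrow> 'a set \<Rightarrow> ('i \<Rightarrow> 'a \<Rightarrow> 'a) \<Rightarrow> ('a \<Rightarrow> 'i \<Rightarrow> 'i \<Rightarrow> int) \<Rightarrow> bool" where
  "cartan_scheme I A \<rho> C \<longleftrightarrow> A \<noteq> {}
     \<and> (\<forall>i\<in>I. \<forall>a\<in>A. \<rho> i a \<in> A)
     \<and> (\<forall>a\<in>A. gcm I (C a))
     \<and> (\<forall>i\<in>I. \<forall>a\<in>A. \<rho> i (\<rho> i a) = a)
     \<and> (\<forall>a\<in>A. \<forall>i\<in>I. \<forall>j\<in>I. C a i j = C (\<rho> i a) i j)"

text \<open>The reflection sigma_i for a matrix M: the linear map with
  alpha_j |-> alpha_j - M i j * alpha_i (j in I).\<close>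
definition refl :: "'i set \<Rightarrow> ('i \<Rightarrow> 'i \<Rightarrow> int) \<Rightarrow> 'i \<Rightarrow> ('i \<Rightarrow> int) \<Rightarrow> ('i \<Rightarrow> int)" where
  "refl I M i v = (\<lambda>k. v k - (if k = i then (\<Sum>j\<in>I. M i j * v j) else 0))"

definition pos_part :: "'i set \<Rightarrow> ('i \<Rightarrow> int) set \<Rightarrow> ('i \<Rightarrow> int) set" where
  "pos_part I S = {v \<in> S. \<forall>i\<in>I. v i \<ge> 0}"

definition cone2 :: "'i \<Rightarrow> 'i \<Rightarrow> ('i \<Rightarrow> int) set" where
  "cone2 i j = {v. \<exists>s t::int. s \<ge> 0 \<and> t \<ge> 0 \<and> v = (\<lambda>l. s * alpha i l + t * alpha j l)}"

definition root_system ::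
  "'i set \<Rightarrow> 'a set \<Rightarrow> ('i \<Rightarrow> 'a \<Rightarrow> 'a) \<Rightarrow> ('a \<Rightarrow> 'i \<Rightarrow> 'i \<Rightarrow> int)
     \<Rightarrow> ('a \<Rightarrow> ('i \<Rightarrow> int) set) \<Rightarrow> bool" where
  "root_system I A \<rho> C R \<longleftrightarrow> cartan_scheme I A \<rho> C
     \<and> (\<forall>a\<in>A. R a \<subseteq> zvec I)
     \<and> (\<forall>a\<in>A. R a = pos_part I (R a) \<union> uminus ` pos_part I (R a))
     \<and> (\<forall>a\<in>A. \<forall>i\<in>I. R a \<inter> range (\<lambda>k::int. \<lambda>l. k * alpha i l) = {alpha i, - alpha i})
     \<and> (\<forall>a\<in>A. \<forall>i\<in>I. refl I (C a) i ` R a = R (\<rho> i a))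
     \<and> (\<forall>a\<in>A. \<forall>i\<in>I. \<forall>j\<in>I. i \<noteq> j \<longrightarrow> finite (R a \<inter> cone2 i j) \<longrightarrow>
          ((\<rho> i \<circ> \<rho> j) ^^ card (R a \<inter> cone2 i j)) a = a)"

definition finite_root_system :: "'a set \<Rightarrow> ('a \<Rightarrow> ('i \<Rightarrow> int) set) \<Rightarrow> bool" where
  "finite_root_system A R \<longleftrightarrow> (\<forall>a\<in>A. finite (R a))"

inductive_set gcm_roots :: "'i set \<Rightarrow> ('i \<Rightarrow> 'i \<Rightarrow> int) \<Rightarrow> ('i \<Rightarrow> int) set"
  for I M where
  simple: "i \<in> I \<Longrightarrow> alpha i \<in> gcm_roots I M"
| reflect: "v \<in> gcm_roots I M \<Longrightarrow> i \<in> I \<Longrightarrow> refl I M i v \<in> gcm_roots I M"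

text \<open>Rank two: 1^m 2^n = m alpha_1 + n alpha_2, with I = {1,2} :: nat set.\<close>
definition r2 :: "int \<Rightarrow> int \<Rightarrow> nat \<Rightarrow> int" where
  "r2 m n = (\<lambda>k. if k = 1 then m else if k = 2 then n else 0)"

end

(*
  Walking along the word 1212 from x returns to x and acts
  on coordinates by an integer matrix T of determinant 1 depending only on c12, c^x_21 and c^y_21.
  If R^x is finite, the images of the simple roots under the powers of T stay in R^x, so T has
  finite order; by Cayley-Hamilton this means |tr T| <= 1 or T = +-1, which leaves ten Cartan
  triples.  The triple of type A2 is excluded by (R4): it has three positive roots, whereas
  (rho1 rho2)^3 x = y.

  Conversely, sigma_i permutes the positive roots other than alpha_i, so a positive root that
  becomes negative along a walk must at some step be the simple root being reflected.  For each
  remaining triple some alternating word moves every nonzero nonnegative vector out of the positive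
  cone; hence every positive root is obtained from a simple root by a prefix of this word.  Symbolic
  evaluation of these finitely many prefixes gives finiteness, the lists of positive roots in
  case (2), and R^x = R^y = the Weyl group orbit of the simple roots in case (1).
*)

theory Submission
  imports Defs
begin

section \<open>Walks along words in a root system\<close>

definition nonneg :: "'i set \<Rightarrow> ('i \<Rightarrow> int) \<Rightarrow> bool" where
  "nonneg I v \<longleftrightarrow> (\<forall>i\<in>I. 0 \<le> v i)"

lemma pos_part_iff: "v \<in> pos_part I S \<longleftrightarrow> v \<in> S \<and> nonneg I v"
  by (simp add: pos_part_def nonneg_def)

lemma refl_refl:
  assumes "finite I" "i \<in> I" "M i i = 2"
  shows "refl I M i (refl I M i v) = v"
proof -
  let ?s = "\<Sum>j\<in>I. M i j * v j"
  have "(\<Sum>j\<in>I. M i j * refl I M i v j) = (\<Sum>j\<in>I. M i j * v j - (if j = i then M i j * ?s else 0))"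
    by (rule sum.cong) (auto simp: refl_def right_diff_distrib)
  also have "\<dots> = - ?s"
    using assms by (simp add: sum_subtractf)
  finally have "(\<Sum>j\<in>I. M i j * refl I M i v j) = - ?s" .
  then show ?thesis by (simp add: refl_def fun_eq_iff)
qed

lemma refl_alpha:
  assumes "finite I" "i \<in> I" "M i i = 2"
  shows "refl I M i (alpha i) = - alpha i"
  using assms by (auto simp: refl_def alpha_def fun_eq_iff if_distrib sum.delta cong: if_cong)

lemma refl_uminus: "refl I M i (- v) = - refl I M i v"
  by (simp add: refl_def fun_eq_iff sum_negf)

lemma refl_cong: "(\<And>j. j \<in> I \<Longrightarrow> M i j = N i j) \<Longrightarrow> refl I M i = refl I N i"
  by (simp add: refl_def fun_eq_iff)

lemma gcm_roots_uminus:
  assumes "finite I" "\<And>i. i \<in> I \<Longrightarrow> M i i = 2" "v \<in> gcm_roots I M"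
  shows "- v \<in> gcm_roots I M"
  using assms(3)
proof induction
  case (simple i)
  then show ?case
    using gcm_roots.reflect[OF gcm_roots.simple] refl_alpha[OF assms(1)] assms(2) by metis
next
  case (reflect v i)
  then show ?case by (metis gcm_roots.reflect refl_uminus)
qed

fun walk :: "'i set \<Rightarrow> ('a \<Rightarrow> 'i \<Rightarrow> 'i \<Rightarrow> int) \<Rightarrow> ('i \<Rightarrow> 'a \<Rightarrow> 'a) \<Rightarrow> 'i list \<Rightarrow> 'a
    \<Rightarrow> ('i \<Rightarrow> int) \<Rightarrow> ('i \<Rightarrow> int)" where
  "walk I C \<rho> [] a v = v"
| "walk I C \<rho> (i # is) a v = walk I C \<rho> is (\<rho> i a) (refl I (C a) i v)"

fun walk_obj :: "('i \<Rightarrow> 'a \<Rightarrow> 'a) \<Rightarrow> 'i list \<Rightarrow> 'a \<Rightarrow> 'a" where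
  "walk_obj \<rho> [] a = a"
| "walk_obj \<rho> (i # is) a = walk_obj \<rho> is (\<rho> i a)"

fun reaches_simple :: "'i set \<Rightarrow> ('a \<Rightarrow> 'i \<Rightarrow> 'i \<Rightarrow> int) \<Rightarrow> ('i \<Rightarrow> 'a \<Rightarrow> 'a) \<Rightarrow> 'i list \<Rightarrow> 'a
    \<Rightarrow> ('i \<Rightarrow> int) \<Rightarrow> bool" where
  "reaches_simple I C \<rho> [] a v \<longleftrightarrow> False"
| "reaches_simple I C \<rho> (i # is) a v \<longleftrightarrow> v = alpha i \<or> reaches_simple I C \<rho> is (\<rho> i a) (refl I (C a) i v)"

lemma walk_append:
  "walk I C \<rho> (xs @ ys) a v = walk I C \<rho> ys (walk_obj \<rho> xs a) (walk I C \<rho> xs a v)"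
  by (induction xs arbitrary: a v) auto

lemma walk_obj_append: "walk_obj \<rho> (xs @ ys) a = walk_obj \<rho> ys (walk_obj \<rho> xs a)"
  by (induction xs arbitrary: a) auto

definition negating_word :: "'i set \<Rightarrow> ('a \<Rightarrow> 'i \<Rightarrow> 'i \<Rightarrow> int) \<Rightarrow> ('i \<Rightarrow> 'a \<Rightarrow> 'a)
    \<Rightarrow> 'i list \<Rightarrow> 'a \<Rightarrow> bool" where
  "negating_word I C \<rho> ws a \<longleftrightarrow> set ws \<subseteq> I
     \<and> (\<forall>v\<in>zvec I. nonneg I v \<and> v \<noteq> (\<lambda>_. 0) \<longrightarrow> \<not> nonneg I (walk I C \<rho> ws a v))"

locale finite_rank_root_system =
  fixes I :: "'i set" and A :: "'a set" and \<rho> :: "'i \<Rightarrow> 'a \<Rightarrow> 'a"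
    and C :: "'a \<Rightarrow> 'i \<Rightarrow> 'i \<Rightarrow> int" and R :: "'a \<Rightarrow> ('i \<Rightarrow> int) set"
  assumes root_system: "root_system I A \<rho> C R"
    and finite_I: "finite I" and I_nonempty: "I \<noteq> {}"
begin

lemma cartan_scheme: "cartan_scheme I A \<rho> C"
  using root_system by (simp add: root_system_def)

lemma rho_in: "a \<in> A \<Longrightarrow> i \<in> I \<Longrightarrow> \<rho> i a \<in> A"
  and rho_rho: "a \<in> A \<Longrightarrow> i \<in> I \<Longrightarrow> \<rho> i (\<rho> i a) = a"
  and cartan_rho: "a \<in> A \<Longrightarrow> i \<in> I \<Longrightarrow> j \<in> I \<Longrightarrow> C (\<rho> i a) i j = C a i j"
  and cartan_gcm: "a \<in> A \<Longrightarrow> gcm I (C a)"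
  using cartan_scheme unfolding cartan_scheme_def by metis+

lemma cartan_diag: "a \<in> A \<Longrightarrow> i \<in> I \<Longrightarrow> C a i i = 2"
  using cartan_gcm by (simp add: gcm_def)

lemma roots_zvec: "a \<in> A \<Longrightarrow> R a \<subseteq> zvec I"
  and roots_pos_neg: "a \<in> A \<Longrightarrow> R a = pos_part I (R a) \<union> uminus ` pos_part I (R a)"
  and roots_line: "a \<in> A \<Longrightarrow> i \<in> I \<Longrightarrow> R a \<inter> range (\<lambda>k. \<lambda>l. k * alpha i l) = {alpha i, - alpha i}"
  and refl_roots: "a \<in> A \<Longrightarrow> i \<in> I \<Longrightarrow> refl I (C a) i ` R a = R (\<rho> i a)"
  and coxeter_relation: "a \<in> A \<Longrightarrow> i \<in> I \<Longrightarrow> j \<in> I \<Longrightarrow> i \<noteq> j \<Longrightarrow> finite (R a \<inter> cone2 i j)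
    \<Longrightarrow> ((\<rho> i \<circ> \<rho> j) ^^ card (R a \<inter> cone2 i j)) a = a"
  using root_system unfolding root_system_def by metis+

lemma refl_refl_cartan: "a \<in> A \<Longrightarrow> i \<in> I \<Longrightarrow> refl I (C a) i (refl I (C a) i v) = v"
  using refl_refl[OF finite_I, of i "C a"] cartan_diag by simp

lemma simple_root: "a \<in> A \<Longrightarrow> i \<in> I \<Longrightarrow> alpha i \<in> R a"
  using roots_line by blast

lemma refl_root: "a \<in> A \<Longrightarrow> i \<in> I \<Longrightarrow> v \<in> R a \<Longrightarrow> refl I (C a) i v \<in> R (\<rho> i a)"
  using refl_roots by blast

lemma root_pos_or_neg:
  assumes "a \<in> A" "v \<in> R a"
  shows "nonneg I v \<or> nonneg I (- v)"
proof -
  have "v \<in> pos_part I (R a) \<or> v \<in> uminus ` pos_part I (R a)"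
    using assms roots_pos_neg by blast
  then show ?thesis by (auto simp: pos_part_iff nonneg_def)
qed

lemma zero_not_root: "a \<in> A \<Longrightarrow> (\<lambda>_. 0) \<notin> R a"
proof
  assume "a \<in> A" "(\<lambda>_. 0) \<in> R a"
  obtain i where "i \<in> I" using I_nonempty by blast
  have "(\<lambda>_. 0) \<in> range (\<lambda>k. \<lambda>l. k * alpha i l)" by (auto intro: range_eqI[of _ _ 0])
  then have "(\<lambda>_. 0) \<in> {alpha i, - alpha i}"
    using roots_line[OF \<open>a \<in> A\<close> \<open>i \<in> I\<close>] \<open>(\<lambda>_. 0) \<in> R a\<close> by blast
  then have "0 = alpha i i \<or> 0 = - alpha i i" by (auto simp: fun_eq_iff)
  then show False by (simp add: alpha_def)
qed

text \<open>A positive root other than \<open>\<alpha>\<^sub>i\<close> has a positive coordinate away from \<open>i\<close>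
  (R2), which the reflection \<open>\<sigma>\<^sub>i\<close> does not change.\<close>
lemma refl_nonneg:
  assumes a: "a \<in> A" and i: "i \<in> I" and v: "v \<in> R a" "nonneg I v" and ne: "v \<noteq> alpha i"
  shows "nonneg I (refl I (C a) i v)"
proof -
  have "\<exists>j\<in>I. j \<noteq> i \<and> 0 < v j"
  proof (rule ccontr)
    assume no_pos: "\<not> ?thesis"
    have "v l = 0" if "l \<noteq> i" for l
    proof (cases "l \<in> I")
      case True
      then have "\<not> 0 < v l" "0 \<le> v l" using no_pos that v(2) by (auto simp: nonneg_def)
      then show ?thesis by simp
    next
      case False
      then show ?thesis using v(1) roots_zvec[OF a] by (auto simp: zvec_def)
    qed
    then have "v = (\<lambda>l. v i * alpha i l)" by (auto simp: alpha_def)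
    then have "v \<in> range (\<lambda>k. \<lambda>l. k * alpha i l)" by (metis rangeI)
    then have "v \<in> {alpha i, - alpha i}" using roots_line[OF a i] v(1) by blast
    moreover have "\<not> nonneg I (- alpha i)" using i by (auto simp: nonneg_def alpha_def)
    ultimately show False using ne v(2) by blast
  qed
  then obtain j where j: "j \<in> I" "j \<noteq> i" "0 < v j" by blast
  then have "refl I (C a) i v j = v j" by (simp add: refl_def)
  then have "\<not> nonneg I (- refl I (C a) i v)" using j by (force simp: nonneg_def)
  then show ?thesis using root_pos_or_neg[OF rho_in[OF a i] refl_root[OF a i v(1)]] by blast
qed

lemma walk_root:
  "a \<in> A \<Longrightarrow> set ws \<subseteq> I \<Longrightarrow> v \<in> R a \<Longrightarrow> walk I C \<rho> ws a v \<in> R (walk_obj \<rho> ws a)"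
proof (induction ws arbitrary: a v)
  case (Cons i ws)
  then show ?case using rho_in[of a i] refl_root[of a i v] by simp
qed simp

lemma refl_root_iff: "a \<in> A \<Longrightarrow> i \<in> I \<Longrightarrow> refl I (C a) i v \<in> R (\<rho> i a) \<longleftrightarrow> v \<in> R a"
proof
  assume a: "a \<in> A" and i: "i \<in> I" and "refl I (C a) i v \<in> R (\<rho> i a)"
  then have "refl I (C (\<rho> i a)) i (refl I (C a) i v) \<in> R a"
    using refl_root[OF rho_in[OF a i] i] by (simp add: rho_rho[OF a i])
  moreover have "refl I (C (\<rho> i a)) i = refl I (C a) i"
    by (rule refl_cong) (simp add: cartan_rho[OF a i])
  ultimately show "v \<in> R a" using refl_refl_cartan[OF a i] by simp
qed (rule refl_root)

lemma reaches_simple_mem: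
  assumes simple: "\<And>b i. b \<in> A \<Longrightarrow> i \<in> I \<Longrightarrow> alpha i \<in> S b"
    and refl_back: "\<And>b i v. b \<in> A \<Longrightarrow> i \<in> I \<Longrightarrow> refl I (C b) i v \<in> S (\<rho> i b) \<Longrightarrow> v \<in> S b"
  shows "a \<in> A \<Longrightarrow> set ws \<subseteq> I \<Longrightarrow> reaches_simple I C \<rho> ws a v \<Longrightarrow> v \<in> S a"
proof (induction ws arbitrary: a v)
  case (Cons i ws)
  then have a: "a \<in> A" and i: "i \<in> I" by auto
  show ?case
  proof (cases "v = alpha i")
    case False
    then have "reaches_simple I C \<rho> ws (\<rho> i a) (refl I (C a) i v)" using Cons.prems(3) by simp
    then have "refl I (C a) i v \<in> S (\<rho> i a)"
      using Cons.IH[OF rho_in[OF a i]] Cons.prems(2) by simp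
    then show ?thesis by (rule refl_back[OF a i])
  qed (simp add: simple a i)
qed simp

lemma root_if_reaches_simple:
  "a \<in> A \<Longrightarrow> set ws \<subseteq> I \<Longrightarrow> reaches_simple I C \<rho> ws a v \<Longrightarrow> v \<in> R a"
  by (rule reaches_simple_mem[where S = R]) (simp_all add: simple_root refl_root_iff)

lemma reaches_simple_if_walk_not_nonneg:
  "a \<in> A \<Longrightarrow> set ws \<subseteq> I \<Longrightarrow> v \<in> R a \<Longrightarrow> nonneg I v \<Longrightarrow> \<not> nonneg I (walk I C \<rho> ws a v)
    \<Longrightarrow> reaches_simple I C \<rho> ws a v"
proof (induction ws arbitrary: a v)
  case (Cons i ws)
  then have a: "a \<in> A" and i: "i \<in> I" by auto
  show ?case
  proof (cases "v = alpha i")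
    case False
    then have "reaches_simple I C \<rho> ws (\<rho> i a) (refl I (C a) i v)"
      using Cons.IH[OF rho_in[OF a i] _ refl_root[OF a i] refl_nonneg[OF a i]] Cons.prems by simp
    then show ?thesis by simp
  qed simp
qed simp

lemma finite_reaches_simple: "a \<in> A \<Longrightarrow> set ws \<subseteq> I \<Longrightarrow> finite {v. reaches_simple I C \<rho> ws a v}"
proof (induction ws arbitrary: a)
  case (Cons i ws)
  then have a: "a \<in> A" and i: "i \<in> I" by auto
  let ?H = "{v. reaches_simple I C \<rho> ws (\<rho> i a) v}"
  have "v \<in> insert (alpha i) (refl I (C a) i ` ?H)" if "reaches_simple I C \<rho> (i # ws) a v" for v
  proof (cases "v = alpha i")
    case False
    then have "refl I (C a) i v \<in> ?H" using that by simp
    moreover have "v = refl I (C a) i (refl I (C a) i v)"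
      using refl_refl_cartan[OF a i] by simp
    ultimately show ?thesis by blast
  qed simp
  then have "{v. reaches_simple I C \<rho> (i # ws) a v} \<subseteq> insert (alpha i) (refl I (C a) i ` ?H)"
    by blast
  moreover have "finite ?H" using Cons rho_in[OF a i] by simp
  ultimately show ?case by (metis finite_imageI finite_insert finite_subset)
next
  case Nil
  have "{v. reaches_simple I C \<rho> [] a v} = {}" by simp
  then show ?case by (simp only: finite.emptyI)
qed

lemma pos_part_subset_reaches_simple:
  assumes a: "a \<in> A" and neg: "negating_word I C \<rho> ws a"
  shows "pos_part I (R a) \<subseteq> {v. reaches_simple I C \<rho> ws a v}"
proof
  fix v assume "v \<in> pos_part I (R a)"
  then have v: "v \<in> R a" "nonneg I v" by (simp_all add: pos_part_iff)
  moreover have "v \<in> zvec I" "v \<noteq> (\<lambda>_. 0)" using v roots_zvec[OF a] zero_not_root[OF a] by auto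
  ultimately have "\<not> nonneg I (walk I C \<rho> ws a v)" using neg by (simp add: negating_word_def)
  with v show "v \<in> {v. reaches_simple I C \<rho> ws a v}"
    using reaches_simple_if_walk_not_nonneg[OF a _ v] neg by (simp add: negating_word_def)
qed

lemma finite_roots_if_finite_pos_part: "a \<in> A \<Longrightarrow> finite (pos_part I (R a)) \<Longrightarrow> finite (R a)"
  using roots_pos_neg by (metis finite_Un finite_imageI)

lemma finite_roots_if_negating_word: "a \<in> A \<Longrightarrow> negating_word I C \<rho> ws a \<Longrightarrow> finite (R a)"
  using finite_roots_if_finite_pos_part finite_reaches_simple pos_part_subset_reaches_simple
  by (metis finite_subset negating_word_def)

lemma gcm_roots_subset_roots:
  assumes M: "\<And>a i j. a \<in> A \<Longrightarrow> i \<in> I \<Longrightarrow> j \<in> I \<Longrightarrow> C a i j = M i j"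
    and v: "v \<in> gcm_roots I M" and b: "b \<in> A"
  shows "v \<in> R b"
  using v b
proof (induction arbitrary: b)
  case (simple i)
  then show ?case by (simp add: simple_root)
next
  case (reflect v i)
  have "refl I (C (\<rho> i b)) i v \<in> R (\<rho> i (\<rho> i b))"
    using reflect rho_in[OF reflect.prems reflect.hyps(2)] refl_root by blast
  moreover have "refl I (C (\<rho> i b)) i = refl I M i"
    by (rule refl_cong) (simp add: M rho_in reflect)
  ultimately show ?case using rho_rho reflect by simp
qed

lemma gcm_root_if_reaches_simple:
  assumes M: "\<And>a i j. a \<in> A \<Longrightarrow> i \<in> I \<Longrightarrow> j \<in> I \<Longrightarrow> C a i j = M i j"
  shows "a \<in> A \<Longrightarrow> set ws \<subseteq> I \<Longrightarrow> reaches_simple I C \<rho> ws a v \<Longrightarrow> v \<in> gcm_roots I M"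
proof (rule reaches_simple_mem[where S = "\<lambda>_. gcm_roots I M"])
  fix b i v assume b: "b \<in> A" and i: "i \<in> I" and "refl I (C b) i v \<in> gcm_roots I M"
  moreover have "refl I (C b) i = refl I M i" by (rule refl_cong) (simp add: M b i)
  ultimately have "refl I M i (refl I M i v) \<in> gcm_roots I M" by (simp add: gcm_roots.reflect i)
  then show "v \<in> gcm_roots I M" using refl_refl[OF finite_I i, of M] M[OF b i i] cartan_diag[OF b i] by simp
qed (simp add: gcm_roots.simple)

lemma roots_eq_gcm_roots:
  assumes M: "\<And>a i j. a \<in> A \<Longrightarrow> i \<in> I \<Longrightarrow> j \<in> I \<Longrightarrow> C a i j = M i j"
    and a: "a \<in> A" and neg: "negating_word I C \<rho> ws a"
  shows "R a = gcm_roots I M"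
proof
  have "pos_part I (R a) \<subseteq> gcm_roots I M"
    using pos_part_subset_reaches_simple[OF a neg] gcm_root_if_reaches_simple[OF M a] neg
    by (auto simp: negating_word_def)
  moreover have "\<And>i. i \<in> I \<Longrightarrow> M i i = 2" using M[OF a] cartan_diag[OF a] by metis
  ultimately show "R a \<subseteq> gcm_roots I M"
    using roots_pos_neg[OF a] gcm_roots_uminus[OF finite_I] by blast
qed (use gcm_roots_subset_roots[OF M _ a] in blast)

end

section \<open>Rank two: coordinates and integer \<open>2 \<times> 2\<close> matrices\<close>

text \<open>Otherwise the simplifier turns the index \<open>1\<close> into \<open>Suc 0\<close>, and the rewrite rules
  for \<open>r2\<close> and \<open>refl {1,2}\<close> below no longer match.\<close>
declare One_nat_def [simp del]

lemma r2_apply [simp]: "r2 p q 1 = p" "r2 p q 2 = q"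
  by (simp_all add: r2_def)

lemma r2_eq_iff [simp]: "r2 p q = r2 p' q' \<longleftrightarrow> p = p' \<and> q = q'"
  by (metis r2_apply)

lemma alpha_r2 [simp]: "alpha 1 = r2 1 0" "alpha 2 = r2 0 1"
  by (auto simp: alpha_def r2_def)

lemma nonneg_r2 [simp]: "nonneg {1,2} (r2 p q) \<longleftrightarrow> 0 \<le> p \<and> 0 \<le> q"
  by (simp add: nonneg_def)

lemma refl_r2 [simp]:
  "refl {1,2} M 1 (r2 p q) = r2 (p - (M 1 1 * p + M 1 2 * q)) q"
  "refl {1,2} M 2 (r2 p q) = r2 p (q - (M 2 1 * p + M 2 2 * q))"
  by (auto simp: refl_def r2_def)

lemma zvec_r2: "v \<in> zvec {1,2} \<Longrightarrow> \<exists>p q. v = r2 p q"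
  by (rule exI[of _ "v 1"], rule exI[of _ "v 2"]) (auto simp: zvec_def r2_def)

lemma r2_00: "r2 0 0 = (\<lambda>_. 0)"
  by (simp add: r2_def fun_eq_iff)

datatype mat2 = Mat2 int int int int

instantiation mat2 :: monoid_mult
begin

fun times_mat2 :: "mat2 \<Rightarrow> mat2 \<Rightarrow> mat2" where
  "times_mat2 (Mat2 a b c d) (Mat2 a' b' c' d') =
     Mat2 (a * a' + b * c') (a * b' + b * d') (c * a' + d * c') (c * b' + d * d')"

definition one_mat2 :: mat2 where
  "one_mat2 = Mat2 1 0 0 1"

instance
proof
  fix A B D :: mat2
  show "A * B * D = A * (B * D)" by (cases A; cases B; cases D) (simp add: algebra_simps)
  show "1 * A = A" by (cases A) (simp add: one_mat2_def)
  show "A * 1 = A" by (cases A) (simp add: one_mat2_def)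
qed

end

fun mat2_app :: "mat2 \<Rightarrow> (nat \<Rightarrow> int) \<Rightarrow> (nat \<Rightarrow> int)" where
  "mat2_app (Mat2 a b c d) v = r2 (a * v 1 + b * v 2) (c * v 1 + d * v 2)"

lemma mat2_app_mult: "mat2_app (A * B) v = mat2_app A (mat2_app B v)"
  by (cases A; cases B) (simp add: r2_def algebra_simps)

lemma mat2_eqI:
  assumes "mat2_app A (r2 1 0) = mat2_app B (r2 1 0)" "mat2_app A (r2 0 1) = mat2_app B (r2 0 1)"
  shows "A = B"
proof (cases A, cases B)
  fix a b c d a' b' c' d' assume "A = Mat2 a b c d" "B = Mat2 a' b' c' d'"
  with assms have "r2 a c = r2 a' c'" "r2 b d = r2 b' d'" by simp_all
  then show ?thesis by (simp add: \<open>A = _\<close> \<open>B = _\<close>)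
qed

fun lucas_u :: "int \<Rightarrow> nat \<Rightarrow> int" where
  "lucas_u t 0 = 0"
| "lucas_u t (Suc 0) = 1"
| "lucas_u t (Suc (Suc k)) = t * lucas_u t (Suc k) - lucas_u t k"

lemma mat2_power_Suc:
  assumes det: "a * d - b * c = 1"
  defines "u \<equiv> lucas_u (a + d)"
  shows "Mat2 a b c d ^ Suc k = Mat2 (u (Suc k) * a - u k) (u (Suc k) * b) (u (Suc k) * c) (u (Suc k) * d - u k)"
proof (induction k)
  case 0
  then show ?case by (simp add: u_def)
next
  case (Suc k)
  have "Mat2 a b c d ^ Suc (Suc k) = Mat2 a b c d ^ Suc k * Mat2 a b c d" by (rule power_Suc2)
  also have "\<dots> = Mat2 (u (Suc (Suc k)) * a - u (Suc k)) (u (Suc (Suc k)) * b)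
      (u (Suc (Suc k)) * c) (u (Suc (Suc k)) * d - u (Suc k))"
    unfolding Suc.IH using det by (simp add: u_def algebra_simps) algebra
  finally show ?case .
qed

lemma lucas_u_abs_Suc:
  assumes "2 \<le> \<bar>t\<bar>"
  shows "\<bar>lucas_u t k\<bar> < \<bar>lucas_u t (Suc k)\<bar>"
proof (induction k)
  case (Suc k)
  have "2 * \<bar>lucas_u t (Suc k)\<bar> \<le> \<bar>t * lucas_u t (Suc k)\<bar>"
    using assms by (simp add: abs_mult mult_right_mono)
  then show ?case using Suc.IH by simp
qed simp

lemma lucas_u_abs_inj:
  assumes "2 \<le> \<bar>t\<bar>" "i \<noteq> j"
  shows "lucas_u t i \<noteq> lucas_u t j"
proof -
  have "strict_mono (\<lambda>k. \<bar>lucas_u t k\<bar>)"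
    using lucas_u_abs_Suc[OF assms(1)] by (simp add: strict_mono_Suc_iff)
  then show ?thesis using assms(2) by (metis strict_mono_eq)
qed

text \<open>By \<open>mat2_power_Suc\<close>, \<open>M\<^sup>i = M\<^sup>j\<close> makes \<open>(u\<^sub>i\<^sub>+\<^sub>1 - u\<^sub>j\<^sub>+\<^sub>1) M\<close> scalar, and
  \<open>u\<^sub>i\<^sub>+\<^sub>1 \<noteq> u\<^sub>j\<^sub>+\<^sub>1\<close> as soon as \<open>|trace M| \<ge> 2\<close>.\<close>
lemma mat2_finite_order:
  assumes det: "a * d - b * c = 1" and eq: "Mat2 a b c d ^ i = Mat2 a b c d ^ j" and "i \<noteq> j"
  shows "\<bar>a + d\<bar> \<le> 1 \<or> (b = 0 \<and> c = 0 \<and> d = a \<and> \<bar>a\<bar> = 1)"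
proof (cases "\<bar>a + d\<bar> \<le> 1")
  case False
  then have "2 \<le> \<bar>a + d\<bar>" by simp
  let ?u = "lucas_u (a + d)"
  have ne: "?u (Suc i) - ?u (Suc j) \<noteq> 0" using lucas_u_abs_inj[OF \<open>2 \<le> \<bar>a + d\<bar>\<close>] \<open>i \<noteq> j\<close> by simp
  have "Mat2 a b c d ^ Suc i = Mat2 a b c d ^ Suc j" using eq by (simp only: power_Suc)
  then have "(?u (Suc i) - ?u (Suc j)) * b = 0" "(?u (Suc i) - ?u (Suc j)) * c = 0"
    "(?u (Suc i) - ?u (Suc j)) * (a - d) = 0"
    unfolding mat2_power_Suc[OF det] by (simp_all add: algebra_simps)
  then have "b = 0" "c = 0" "d = a" using ne by simp_all
  moreover have "a * a = 1" using det calculation by simp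
  ultimately show ?thesis using zmult_eq_1_iff by auto
qed simp

text \<open>The matrix of \<open>\<sigma>\<^sub>2\<^sup>x \<sigma>\<^sub>1\<^sup>y \<sigma>\<^sub>2\<^sup>y \<sigma>\<^sub>1\<^sup>x\<close> (the walk \<open>x \<rightarrow> y \<rightarrow> y \<rightarrow> x \<rightarrow> x\<close>)
  for \<open>a = c\<^sub>1\<^sub>2\<close>, \<open>b = c\<^sup>x\<^sub>2\<^sub>1\<close>, \<open>b' = c\<^sup>y\<^sub>2\<^sub>1\<close>.\<close>
definition coxeter_mat2 :: "int \<Rightarrow> int \<Rightarrow> int \<Rightarrow> mat2" where
  "coxeter_mat2 a b b' =
     Mat2 (1 - a * b') (2 * a - a\<^sup>2 * b') (a * b * b' - b - b') (1 - a * b' - 2 * a * b + a\<^sup>2 * b * b')"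

lemma coxeter_mat2_finite_order:
  assumes "coxeter_mat2 a b b' ^ i = coxeter_mat2 a b b' ^ j" "i \<noteq> j"
  shows "(a * b - 2) * (a * b' - 2) \<in> {1,2,3} \<or> a * b' = 0 \<or> (a * b' = 2 \<and> b = b')"
proof -
  have det: "(1 - a * b') * (1 - a * b' - 2 * a * b + a\<^sup>2 * b * b')
      - (2 * a - a\<^sup>2 * b') * (a * b * b' - b - b') = 1"
    by (simp add: algebra_simps power2_eq_square)
  have trace: "(1 - a * b') + (1 - a * b' - 2 * a * b + a\<^sup>2 * b * b') = (a * b - 2) * (a * b' - 2) - 2"
    by (simp add: algebra_simps power2_eq_square)
  from mat2_finite_order[OF det assms[unfolded coxeter_mat2_def]]
  consider "\<bar>(a * b - 2) * (a * b' - 2) - 2\<bar> \<le> 1"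
    | "a * b * b' - b - b' = 0" "\<bar>1 - a * b'\<bar> = 1"
    unfolding trace by blast
  then show ?thesis
  proof cases
    case 2
    then consider "a * b' = 0" | "a * b' = 2" by linarith
    then show ?thesis
    proof cases
      case 2
      then have "a * b * b' = 2 * b" by (metis mult.assoc mult.commute)
      then have "b = b'" using \<open>a * b * b' - b - b' = 0\<close> by linarith
      then show ?thesis using 2 by simp
    qed simp
  qed auto
qed

lemma int_factor_bound:
  fixes u v :: int
  assumes "1 \<le> u" "1 \<le> v" "(u - 2) * (v - 2) \<in> {1,2,3}"
  shows "u \<le> 5"
proof (rule ccontr)
  assume "\<not> u \<le> 5"
  then have "4 \<le> u - 2" by simp
  show False
  proof (cases "v \<le> 2")
    case True
    then have "(u - 2) * (v - 2) \<le> 0" using \<open>4 \<le> u - 2\<close> by (intro mult_nonneg_nonpos) auto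
    then show False using assms(3) by auto
  next
    case False
    then have "4 * 1 \<le> (u - 2) * (v - 2)" using \<open>4 \<le> u - 2\<close> by (intro mult_mono) auto
    then show False using assms(3) by auto
  qed
qed

lemma int_neg_factor_le: "(a :: int) \<le> -1 \<Longrightarrow> b \<le> -1 \<Longrightarrow> - a \<le> a * b"
  using mult_left_mono[of 1 "- b" "- a"] by simp

lemma int_neg_ge5_cases: "(a :: int) \<le> -1 \<Longrightarrow> -5 \<le> a \<Longrightarrow> a \<in> {-1,-2,-3,-4,-5}"
  by auto

lemma cartan_triple_cases:
  fixes a b b' :: int
  assumes nonpos: "a \<le> 0" "b \<le> 0" "b' \<le> 0" and zero: "a = 0 \<longleftrightarrow> b = 0" "a = 0 \<longleftrightarrow> b' = 0"
    and fin: "(a * b - 2) * (a * b' - 2) \<in> {1,2,3} \<or> a * b' = 0 \<or> (a * b' = 2 \<and> b = b')"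
  shows "(a, b, b') \<in> {(0,0,0), (-1,-1,-1), (-1,-2,-2), (-2,-1,-1), (-1,-3,-3), (-3,-1,-1),
    (-1,-3,-4), (-1,-4,-3), (-1,-3,-5), (-1,-5,-3)}"
proof (cases "a = 0")
  case False
  then have neg: "a \<le> -1" "b \<le> -1" "b' \<le> -1" using nonpos zero by auto
  have ab: "- a \<le> a * b" "- b \<le> a * b" "- a \<le> a * b'" "- b' \<le> a * b'"
    using int_neg_factor_le[OF neg(1,2)] int_neg_factor_le[OF neg(2,1)]
      int_neg_factor_le[OF neg(1,3)] int_neg_factor_le[OF neg(3,1)] by (simp_all add: mult.commute)
  have "a * b' \<noteq> 0" using ab neg by linarith
  then consider "(a * b - 2) * (a * b' - 2) \<in> {1,2,3}" | "a * b' = 2" "b = b'"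
    using fin by blast
  then show ?thesis
  proof cases
    case 1
    then have "a * b \<le> 5" "a * b' \<le> 5"
      using int_factor_bound[of "a * b" "a * b'"] int_factor_bound[of "a * b'" "a * b"] ab neg
      by (simp_all add: mult.commute)
    then have "a \<in> {-1,-2,-3,-4,-5}" "b \<in> {-1,-2,-3,-4,-5}" "b' \<in> {-1,-2,-3,-4,-5}"
      using ab neg by (intro int_neg_ge5_cases; linarith)+
    then show ?thesis using 1 unfolding insert_iff empty_iff by (elim disjE) simp_all
  next
    case 2
    then have "a \<in> {-1,-2}" "b' \<in> {-1,-2}" using ab neg by auto
    then show ?thesis using 2 unfolding insert_iff empty_iff by (elim disjE) simp_all
  qed
qed (use zero in simp)

lemma cartan_pair_cases:
  fixes a b :: int
  assumes "a \<le> 0" "b \<le> 0" "a * b \<in> {2,3}"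
  shows "(a, b) \<in> {(-1,-2), (-2,-1), (-1,-3), (-3,-1)}"
proof -
  have "a \<noteq> 0" "b \<noteq> 0" using assms(3) by auto
  then have "a \<le> -1" "b \<le> -1" using assms(1,2) by linarith+
  then have "- a \<le> a * b" "- b \<le> a * b"
    using int_neg_factor_le[of a b] int_neg_factor_le[of b a] by (simp_all add: mult.commute)
  then have "a \<in> {-1,-2,-3}" "b \<in> {-1,-2,-3}" using assms \<open>a \<le> -1\<close> \<open>b \<le> -1\<close> by auto
  then show ?thesis using assms(3) unfolding insert_iff empty_iff by (elim disjE) simp_all
qed

lemma negating_word_r2I:
  assumes "set ws \<subseteq> {1,2}"
    and "\<And>p q. 0 \<le> p \<Longrightarrow> 0 \<le> q \<Longrightarrow> p \<noteq> 0 \<or> q \<noteq> 0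
      \<Longrightarrow> \<not> nonneg {1,2} (walk {1,2} C \<rho> ws a (r2 p q))"
  shows "negating_word {1,2} C \<rho> ws a"
  unfolding negating_word_def
proof (intro conjI assms(1) ballI impI)
  fix v :: "nat \<Rightarrow> int" assume "v \<in> zvec {1,2}" and v: "nonneg {1,2} v \<and> v \<noteq> (\<lambda>_. 0)"
  then obtain p q where "v = r2 p q" using zvec_r2 by blast
  with v show "\<not> nonneg {1,2} (walk {1,2} C \<rho> ws a v)" using assms(2) r2_00 by auto
qed

section \<open>Two objects interchanged by \<open>\<rho>\<^sub>1\<close> and fixed by \<open>\<rho>\<^sub>2\<close>\<close>

definition finite_type_pair :: "('a \<Rightarrow> nat \<Rightarrow> nat \<Rightarrow> int) \<Rightarrow> 'a \<Rightarrow> 'a \<Rightarrow> bool" where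
  "finite_type_pair C u v \<longleftrightarrow> (\<forall>i\<in>{1,2}. \<forall>j\<in>{1,2}. C u i j = C v i j)
     \<and> ((C u 1 2 = 0 \<and> C u 2 1 = 0) \<or> C u 1 2 * C u 2 1 \<in> {2,3})"

lemma finite_type_pair_sym: "finite_type_pair C u v \<Longrightarrow> finite_type_pair C v u"
  by (auto simp: finite_type_pair_def)

definition exceptional_pair :: "('a \<Rightarrow> nat \<Rightarrow> nat \<Rightarrow> int) \<Rightarrow> 'a \<Rightarrow> 'a \<Rightarrow> bool" where
  "exceptional_pair C u v \<longleftrightarrow> C u 1 2 = -1 \<and> C v 1 2 = -1 \<and> C u 2 1 = -3 \<and> C v 2 1 \<in> {-4,-5}"

locale rank_two_swap = finite_rank_root_system "{1,2}" "{x,y}" \<rho> C R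
  for x y :: 'a and \<rho> :: "nat \<Rightarrow> 'a \<Rightarrow> 'a" and C :: "'a \<Rightarrow> nat \<Rightarrow> nat \<Rightarrow> int"
    and R :: "'a \<Rightarrow> (nat \<Rightarrow> int) set" +
  assumes x_ne_y: "x \<noteq> y"
    and rho1_x: "\<rho> 1 x = y" and rho1_y: "\<rho> 1 y = x" and rho2_x: "\<rho> 2 x = x" and rho2_y: "\<rho> 2 y = y"
begin

lemma swap: "rank_two_swap y x \<rho> C R"
proof
  show "root_system {1,2} {y,x} \<rho> C R" using root_system by (simp add: insert_commute)
qed (use x_ne_y rho1_x rho1_y rho2_x rho2_y in simp_all)

lemma cartan_y_12: "C y 1 2 = C x 1 2"
  using cartan_rho[of x 1 2] rho1_x by simp

lemma cartan_diag_xy: "C x 1 1 = 2" "C x 2 2 = 2" "C y 1 1 = 2" "C y 2 2 = 2"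
  using cartan_diag by auto

lemma cartan_offdiag:
  assumes "a \<in> {x,y}"
  shows "C a 1 2 \<le> 0" "C a 2 1 \<le> 0" "C a 1 2 = 0 \<longleftrightarrow> C a 2 1 = 0"
  using cartan_gcm[OF assms] by (auto simp: gcm_def)

lemmas walk_simps = walk.simps reaches_simple.simps rho1_x rho1_y rho2_x rho2_y cartan_y_12 cartan_diag_xy

lemma pos_part_eqI:
  assumes a: "a \<in> {x,y}" and neg: "negating_word {1,2} C \<rho> ws a"
    and reaches_in: "\<forall>p q. 0 \<le> p \<longrightarrow> 0 \<le> q \<longrightarrow> reaches_simple {1,2} C \<rho> ws a (r2 p q) \<longrightarrow> r2 p q \<in> S"
    and S_reaches: "\<forall>v\<in>S. nonneg {1,2} v \<and> reaches_simple {1,2} C \<rho> ws a v"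
  shows "pos_part {1,2} (R a) = S"
proof
  show "pos_part {1,2} (R a) \<subseteq> S"
  proof
    fix v assume v: "v \<in> pos_part {1,2} (R a)"
    then have "v \<in> zvec {1,2}" using roots_zvec[OF a] by (auto simp: pos_part_iff)
    then obtain p q where pq: "v = r2 p q" using zvec_r2 by blast
    have "reaches_simple {1,2} C \<rho> ws a v" using pos_part_subset_reaches_simple[OF a neg] v by blast
    then show "v \<in> S" using reaches_in v unfolding pq by (simp add: pos_part_iff)
  qed
  show "S \<subseteq> pos_part {1,2} (R a)"
    using S_reaches root_if_reaches_simple[OF a] neg by (auto simp: pos_part_iff negating_word_def)
qed

lemma roots_inter_cone2: "a \<in> {x,y} \<Longrightarrow> R a \<inter> cone2 1 2 = pos_part {1,2} (R a)"
proof (intro equalityI subsetI)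
  fix v assume "v \<in> R a \<inter> cone2 1 2"
  then show "v \<in> pos_part {1,2} (R a)" by (auto simp: cone2_def pos_part_iff nonneg_def alpha_def)
next
  fix v assume a: "a \<in> {x,y}" and v: "v \<in> pos_part {1,2} (R a)"
  then have "v \<in> zvec {1,2}" using roots_zvec by (auto simp: pos_part_iff)
  then obtain p q where pq: "v = r2 p q" using zvec_r2 by blast
  then have "0 \<le> p" "0 \<le> q" using v by (simp_all add: pos_part_iff)
  moreover have "v = (\<lambda>l. p * alpha 1 l + q * alpha 2 l)" by (auto simp: pq r2_def alpha_def)
  ultimately have "v \<in> cone2 1 2" unfolding cone2_def by blast
  then show "v \<in> R a \<inter> cone2 1 2" using v by (simp add: pos_part_iff)
qed

definition coxeter_elt :: mat2 where
  "coxeter_elt = coxeter_mat2 (C x 1 2) (C x 2 1) (C y 2 1)"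

lemma walk_coxeter_word: "walk {1,2} C \<rho> [1,2,1,2] x (r2 p q) = mat2_app coxeter_elt (r2 p q)"
  by (simp add: walk_simps coxeter_elt_def coxeter_mat2_def algebra_simps power2_eq_square)

lemma walk_coxeter_power:
  "walk {1,2} C \<rho> (concat (replicate k [1,2,1,2])) x (r2 p q) = mat2_app (coxeter_elt ^ k) (r2 p q)"
proof (induction k arbitrary: p q)
  case 0
  then show ?case by (simp add: one_mat2_def)
next
  case (Suc k)
  obtain p' q' where pq: "mat2_app coxeter_elt (r2 p q) = r2 p' q'" by (cases coxeter_elt) auto
  have x: "walk_obj \<rho> [1,2,1,2] x = x" by (simp add: walk_simps)
  have "walk {1,2} C \<rho> (concat (replicate (Suc k) [1,2,1,2])) x (r2 p q)
      = walk {1,2} C \<rho> (concat (replicate k [1,2,1,2])) x (walk {1,2} C \<rho> [1,2,1,2] x (r2 p q))"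
    by (simp only: replicate_Suc concat.simps walk_append x)
  also have "\<dots> = mat2_app (coxeter_elt ^ k) (mat2_app coxeter_elt (r2 p q))"
    by (simp only: walk_coxeter_word pq Suc.IH)
  finally show ?case by (simp only: power_Suc2 mat2_app_mult)
qed

lemma coxeter_power_eq_if_finite:
  assumes "finite (R x)"
  shows "\<exists>i j. i \<noteq> j \<and> coxeter_elt ^ i = coxeter_elt ^ j"
proof -
  define f where "f k = (mat2_app (coxeter_elt ^ k) (r2 1 0), mat2_app (coxeter_elt ^ k) (r2 0 1))" for k
  have "walk {1,2} C \<rho> (concat (replicate k [1,2,1,2])) x v \<in> R x" if "v \<in> R x" for k v
  proof -
    have "set (concat (replicate k [1::nat,2,1,2])) \<subseteq> {1,2}" by auto
    from walk_root[OF insertI1 this that]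
    have "walk {1,2} C \<rho> (concat (replicate k [1,2,1,2])) x v \<in> R (walk_obj \<rho> (concat (replicate k [1,2,1,2])) x)" .
    moreover have "walk_obj \<rho> (concat (replicate k [1,2,1,2])) x = x"
      by (induction k) (simp_all add: walk_obj_append walk_simps)
    ultimately show ?thesis by simp
  qed
  then have "range f \<subseteq> R x \<times> R x"
    using simple_root[of x 1] simple_root[of x 2] by (auto simp: f_def walk_coxeter_power[symmetric])
  then have "finite (range f)" using assms by (meson finite_SigmaI finite_subset)
  then have "\<not> inj f" using finite_imageD infinite_UNIV_nat by blast
  then obtain i j where "i \<noteq> j" "f i = f j" by (auto simp: inj_def)
  moreover from \<open>f i = f j\<close> have "coxeter_elt ^ i = coxeter_elt ^ j"
    by (intro mat2_eqI) (simp_all add: f_def)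
  ultimately show ?thesis by blast
qed

lemma cartan_triple_if_finite:
  assumes "finite (R x)"
  shows "(C x 1 2, C x 2 1, C y 2 1) \<in> {(0,0,0), (-1,-1,-1), (-1,-2,-2), (-2,-1,-1), (-1,-3,-3),
    (-3,-1,-1), (-1,-3,-4), (-1,-4,-3), (-1,-3,-5), (-1,-5,-3)}"
proof (rule cartan_triple_cases)
  show "C x 1 2 \<le> 0" "C x 2 1 \<le> 0" "C y 2 1 \<le> 0"
    "C x 1 2 = 0 \<longleftrightarrow> C x 2 1 = 0" "C x 1 2 = 0 \<longleftrightarrow> C y 2 1 = 0"
    using cartan_offdiag[of x] cartan_offdiag[of y] cartan_y_12 by auto
  show "(C x 1 2 * C x 2 1 - 2) * (C x 1 2 * C y 2 1 - 2) \<in> {1,2,3} \<or> C x 1 2 * C y 2 1 = 0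
      \<or> (C x 1 2 * C y 2 1 = 2 \<and> C x 2 1 = C y 2 1)"
    using coxeter_power_eq_if_finite[OF assms] coxeter_mat2_finite_order
    unfolding coxeter_elt_def by blast
qed

lemma pos_part_if_1_1_1:
  assumes "C x 1 2 = -1" "C x 2 1 = -1" "C y 2 1 = -1"
  shows "pos_part {1,2} (R x) = {r2 1 0, r2 0 1, r2 1 1}"
  by (rule pos_part_eqI[where ws = "[1,2,1]"], simp, rule negating_word_r2I)
    (simp_all add: walk_simps assms, linarith)

lemma not_cartan_1_1_1: "\<not> (C x 1 2 = -1 \<and> C x 2 1 = -1 \<and> C y 2 1 = -1)"
proof
  assume "C x 1 2 = -1 \<and> C x 2 1 = -1 \<and> C y 2 1 = -1"
  then have cone: "R x \<inter> cone2 1 2 = {r2 1 0, r2 0 1, r2 1 1}"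
    using roots_inter_cone2[of x] pos_part_if_1_1_1 by simp
  have "((\<rho> 1 \<circ> \<rho> 2) ^^ card (R x \<inter> cone2 1 2)) x = x"
    by (rule coxeter_relation) (simp_all add: cone)
  moreover have "card (R x \<inter> cone2 1 2) = 3" by (simp add: cone)
  ultimately show False using x_ne_y by (simp add: numeral_3_eq_3 walk_simps)
qed

lemma pair_if_finite:
  assumes "finite (R x)"
  shows "finite_type_pair C x y \<or> exceptional_pair C x y \<or> exceptional_pair C y x"
  using cartan_triple_if_finite[OF assms] not_cartan_1_1_1
  unfolding insert_iff empty_iff
  by (elim disjE) (simp_all add: finite_type_pair_def exceptional_pair_def walk_simps)

lemma negating_word_if_finite_type_pair:
  assumes "finite_type_pair C x y"
  shows "\<exists>ws. negating_word {1,2} C \<rho> ws x"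
proof -
  have y21: "C y 2 1 = C x 2 1" using assms by (simp add: finite_type_pair_def)
  have "(C x 1 2 = 0 \<and> C x 2 1 = 0) \<or> C x 1 2 * C x 2 1 \<in> {2,3}"
    using assms unfolding finite_type_pair_def by blast
  then consider "C x 1 2 = 0" "C x 2 1 = 0" | "C x 1 2 = -1" "C x 2 1 = -2" | "C x 1 2 = -2" "C x 2 1 = -1"
    | "C x 1 2 = -1" "C x 2 1 = -3" | "C x 1 2 = -3" "C x 2 1 = -1"
    using cartan_pair_cases[OF cartan_offdiag(1,2)[OF insertI1]] by auto
  then show ?thesis
  proof cases
    case 1
    show ?thesis by (rule exI[of _ "[1,2]"], rule negating_word_r2I) (simp_all add: walk_simps y21 1)
  next
    case 2
    show ?thesis by (rule exI[of _ "[1,2,1,2]"], rule negating_word_r2I) (simp_all add: walk_simps y21 2)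
  next
    case 3
    show ?thesis by (rule exI[of _ "[1,2,1,2]"], rule negating_word_r2I) (simp_all add: walk_simps y21 3)
  next
    case 4
    show ?thesis by (rule exI[of _ "[1,2,1,2,1,2]"], rule negating_word_r2I) (simp_all add: walk_simps y21 4)
  next
    case 5
    show ?thesis by (rule exI[of _ "[1,2,1,2,1,2]"], rule negating_word_r2I) (simp_all add: walk_simps y21 5)
  qed
qed

lemma roots_if_finite_type_pair:
  assumes "finite_type_pair C x y"
  shows "R x = gcm_roots {1,2} (C x)" "R y = gcm_roots {1,2} (C x)"
proof -
  have same: "C a i j = C x i j" if "a \<in> {x,y}" "i \<in> {1,2}" "j \<in> {1,2}" for a i j
    using assms that by (auto simp: finite_type_pair_def)
  obtain ws where "negating_word {1,2} C \<rho> ws x"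
    using negating_word_if_finite_type_pair[OF assms] by blast
  moreover obtain ws' where "negating_word {1,2} C \<rho> ws' y"
    using rank_two_swap.negating_word_if_finite_type_pair[OF swap finite_type_pair_sym[OF assms]] by blast
  ultimately show "R x = gcm_roots {1,2} (C x)" "R y = gcm_roots {1,2} (C x)"
    using roots_eq_gcm_roots[OF same] by blast+
qed

lemma finite_roots_if_finite_type_pair: "finite_type_pair C x y \<Longrightarrow> finite (R x)"
  using negating_word_if_finite_type_pair finite_roots_if_negating_word by blast

lemma pos_part_if_1_3_4:
  assumes "C x 1 2 = -1" "C x 2 1 = -3" "C y 2 1 = -4"
  shows "pos_part {1,2} (R x) = {r2 1 0, r2 0 1, r2 1 1, r2 1 2, r2 1 3, r2 2 3, r2 3 4, r2 3 5}"
  by (rule pos_part_eqI[where ws = "[1,2,1,2,1,2,1,2]"], simp, rule negating_word_r2I)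
    (simp_all add: walk_simps assms)

lemma pos_part_if_1_4_3:
  assumes "C x 1 2 = -1" "C x 2 1 = -4" "C y 2 1 = -3"
  shows "pos_part {1,2} (R x) = {r2 1 0, r2 0 1, r2 1 1, r2 1 2, r2 1 3, r2 1 4, r2 2 3, r2 2 5}"
  by (rule pos_part_eqI[where ws = "[1,2,1,2,1,2,1,2]"], simp, rule negating_word_r2I)
    (simp_all add: walk_simps assms)

lemma pos_part_if_1_3_5:
  assumes "C x 1 2 = -1" "C x 2 1 = -3" "C y 2 1 = -5"
  shows "pos_part {1,2} (R x) = {r2 1 0, r2 0 1, r2 1 1, r2 1 2, r2 1 3, r2 2 3, r2 3 4, r2 3 5,
    r2 4 5, r2 4 7, r2 5 7, r2 5 8}"
  by (rule pos_part_eqI[where ws = "[1,2,1,2,1,2,1,2,1,2,1,2]"], simp, rule negating_word_r2I)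
    (simp_all add: walk_simps assms)

lemma pos_part_if_1_5_3:
  assumes "C x 1 2 = -1" "C x 2 1 = -5" "C y 2 1 = -3"
  shows "pos_part {1,2} (R x) = {r2 1 0, r2 0 1, r2 1 1, r2 1 2, r2 1 3, r2 1 4, r2 1 5, r2 2 3,
    r2 2 5, r2 2 7, r2 3 7, r2 3 8}"
  by (rule pos_part_eqI[where ws = "[1,2,1,2,1,2,1,2,1,2,1,2]"], simp, rule negating_word_r2I)
    (simp_all add: walk_simps assms)

lemma roots_of_pair:
  "(finite_type_pair C x y \<longrightarrow> R x = R y \<and> R x = gcm_roots {1,2} (C x))
  \<and> (exceptional_pair C x y \<and> C y 2 1 = -4 \<longrightarrow>
      pos_part {1,2} (R x) = {r2 1 0, r2 0 1, r2 1 1, r2 1 2, r2 1 3, r2 2 3, r2 3 4, r2 3 5}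
    \<and> pos_part {1,2} (R y) = {r2 1 0, r2 0 1, r2 1 1, r2 1 2, r2 1 3, r2 1 4, r2 2 3, r2 2 5})
  \<and> (exceptional_pair C x y \<and> C y 2 1 = -5 \<longrightarrow>
      pos_part {1,2} (R x) = {r2 1 0, r2 0 1, r2 1 1, r2 1 2, r2 1 3, r2 2 3, r2 3 4, r2 3 5,
        r2 4 5, r2 4 7, r2 5 7, r2 5 8}
    \<and> pos_part {1,2} (R y) = {r2 1 0, r2 0 1, r2 1 1, r2 1 2, r2 1 3, r2 1 4, r2 1 5, r2 2 3,
        r2 2 5, r2 2 7, r2 3 7, r2 3 8})"
  using roots_if_finite_type_pair pos_part_if_1_3_4 pos_part_if_1_3_5
    rank_two_swap.pos_part_if_1_4_3[OF swap] rank_two_swap.pos_part_if_1_5_3[OF swap]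
  by (simp add: exceptional_pair_def)

lemma finite_roots_if_pair:
  assumes "finite_type_pair C x y \<or> exceptional_pair C x y"
  shows "finite (R x) \<and> finite (R y)"
  using assms
proof
  assume "exceptional_pair C x y"
  then have "finite (pos_part {1,2} (R x)) \<and> finite (pos_part {1,2} (R y))"
    using roots_of_pair by (auto simp: exceptional_pair_def)
  then show ?thesis using finite_roots_if_finite_pos_part by blast
qed (use roots_if_finite_type_pair finite_roots_if_finite_type_pair in metis)

lemma finite_roots_iff:
  "finite (R x) \<and> finite (R y) \<longleftrightarrow>
    (\<exists>u v. {u,v} = {x,y} \<and> u \<noteq> v \<and> (finite_type_pair C u v \<or> exceptional_pair C u v))"
proof
  assume "finite (R x) \<and> finite (R y)"
  then show "\<exists>u v. {u,v} = {x,y} \<and> u \<noteq> v \<and> (finite_type_pair C u v \<or> exceptional_pair C u v)"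
    using pair_if_finite x_ne_y by (metis insert_commute)
next
  assume "\<exists>u v. {u,v} = {x,y} \<and> u \<noteq> v \<and> (finite_type_pair C u v \<or> exceptional_pair C u v)"
  then have "finite_type_pair C x y \<or> exceptional_pair C x y \<or> finite_type_pair C y x \<or> exceptional_pair C y x"
    by (metis doubleton_eq_iff)
  then show "finite (R x) \<and> finite (R y)"
    using finite_roots_if_pair rank_two_swap.finite_roots_if_pair[OF swap] by blast
qed

end

lemma all_doubleton_pairsI:
  "x \<noteq> y \<Longrightarrow> P x y \<Longrightarrow> P y x \<Longrightarrow> \<forall>u v. {u,v} = {x,y} \<and> u \<noteq> v \<longrightarrow> P u v"
  by (auto simp: doubleton_eq_iff)

theorem proposition5p1:
  fixes x y :: 'a
    and \<rho> :: "nat \<Rightarrow> 'a \<Rightarrow> 'a"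
    and C :: "'a \<Rightarrow> nat \<Rightarrow> nat \<Rightarrow> int"
    and R :: "'a \<Rightarrow> (nat \<Rightarrow> int) set"
  assumes xy: "x \<noteq> y"
    and rs: "root_system {1,2} {x,y} \<rho> C R"
    and rho1: "\<rho> 1 x = y" "\<rho> 1 y = x"
    and rho2: "\<forall>a\<in>{x,y}. \<rho> 2 a = a"
  defines "case1 \<equiv> \<lambda>u v. (\<forall>i\<in>{1,2}. \<forall>j\<in>{1,2}. C u i j = C v i j)
              \<and> ((C u 1 2 = 0 \<and> C u 2 1 = 0) \<or> C u 1 2 * C u 2 1 \<in> {2,3})"
    and "case2 \<equiv> \<lambda>u v. C u 1 2 = -1 \<and> C v 1 2 = -1 \<and> C u 2 1 = -3 \<and> C v 2 1 \<in> {-4,-5}"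
  shows "(finite_root_system {x,y} R \<longleftrightarrow>
            (\<exists>u v. {u,v} = {x,y} \<and> u \<noteq> v \<and> (case1 u v \<or> case2 u v)))
       \<and> (\<forall>u v. {u,v} = {x,y} \<and> u \<noteq> v \<longrightarrow>
            (case1 u v \<longrightarrow> R u = R v \<and> R u = gcm_roots {1,2} (C u))
          \<and> (case2 u v \<and> C v 2 1 = -4 \<longrightarrow>
               pos_part {1,2} (R u) = {r2 1 0, r2 0 1, r2 1 1, r2 1 2, r2 1 3, r2 2 3, r2 3 4, r2 3 5}
             \<and> pos_part {1,2} (R v) = {r2 1 0, r2 0 1, r2 1 1, r2 1 2, r2 1 3, r2 1 4, r2 2 3, r2 2 5})
          \<and> (case2 u v \<and> C v 2 1 = -5 \<longrightarrow>
               pos_part {1,2} (R u) = {r2 1 0, r2 0 1, r2 1 1, r2 1 2, r2 1 3, r2 2 3, r2 3 4, r2 3 5,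
                                       r2 4 5, r2 4 7, r2 5 7, r2 5 8}
             \<and> pos_part {1,2} (R v) = {r2 1 0, r2 0 1, r2 1 1, r2 1 2, r2 1 3, r2 1 4, r2 1 5, r2 2 3,
                                       r2 2 5, r2 2 7, r2 3 7, r2 3 8}))"
proof -
  interpret sys_xy: rank_two_swap x y \<rho> C R
    using xy rs rho1 rho2 by unfold_locales auto
  interpret sys_yx: rank_two_swap y x \<rho> C R
    by (rule sys_xy.swap)
  have cases: "case1 = finite_type_pair C" "case2 = exceptional_pair C"
    by (simp_all add: case1_def case2_def fun_eq_iff finite_type_pair_def exceptional_pair_def)
  show ?thesis
    unfolding cases finite_root_system_def
  proof (rule conjI)
    show "(\<forall>a\<in>{x,y}. finite (R a)) \<longleftrightarrow>
        (\<exists>u v. {u,v} = {x,y} \<and> u \<noteq> v \<and> (finite_type_pair C u v \<or> exceptional_pair C u v))"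
      using sys_xy.finite_roots_iff by simp
  qed (rule all_doubleton_pairsI[OF xy], (rule sys_xy.roots_of_pair sys_yx.roots_of_pair)+)
qed

end
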